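(* Let $\Omega$ be a triangulation whose edges are labeled as terminal-, internal- and frontier-edges, and let $R$ be a terminal-edge region of $\Omega$. Apply the polygon construction (traversal) procedure starting from a seed triangle of $R$. During this procedure, each triangle of $R$ is visited at most $3$ times.
   Context: Let $\Omega$ be a triangulation in which every triangle has a designated unique longest edge (ties between equal-length edges are broken arbitrarily but consistently). Edges are labeled as follows. An edge shared by two triangles is: - a terminal-edge if it is the longest edge of both triangles; - a frontier-edge if it is the longest edge of neither triangle; - an internal-edge otherwise. Edges belonging to a single triangle are boundary edges and are treated as frontier-edges. For a triangle $t_0$, $\mathrm{Lepp}(t_0)$ is the sequence $t_0,t_1,\dots$ in which each $t_i$ is the neighbor of $t_{i-1}$ across the longest edge of $t_{i-1}$, ending at a terminal (or boundary) edge. A terminal-edge region is the union of all triangles whose Lepp ends at the same terminal-edge. It is bounded by frontier-edges, and its triangles are connected to each other across internal-edges (and terminal-edges). The polygon construction procedure builds the boundary polygon of $R$ as a counter-clockwise list of frontier-edge vertices. It starts from a seed triangle $t$ of $R$: - If $t$ has 3 frontier-edges, $t$ itself is the polygon. - Otherwise the frontier-edges of $t$ (if any) are appended in counter-clockwise order. The initial vertex $v_{init}$ and the current endpoint $v_{end}$ are recorded (if $t$ has no frontier-edge, both are set to an arbitrary vertex of $t$). The procedure then repeatedly moves from the current triangle to a neighboring triangle $t'$ of $R$, always across a non-frontier edge (an internal-edge), choosing the neighbor that contains $v_{end}$: - If $t'$ has one frontier-edge incident to $v_{end}$, that edge is appended, $v_{end}$ is updated to its other endpoint, and the procedure moves to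 the not-previously-visited internal-edge neighbor containing $v_{end}$. - If $t'$ has two frontier-edges, both are appended, $v_{end}$ is updated, and the procedure returns to the previously visited triangle. - If $t'$ has no frontier-edge, the procedure moves to the internal-edge neighbor, in counter-clockwise order, that contains $v_{end}$. The procedure stops when $v_{end}=v_{init}$ and the walk returns to the starting triangle. Each move into a triangle counts as one visit of that triangle. *)

theory Defs
  imports "HOL-Analysis.Analysis"
begin

text \<open>Vertices are points of the plane (complex numbers); a triangle is the set of its
  three vertices; an edge is a two-element vertex set.\<close>

definition triangulation :: "complex set set \<Rightarrow> bool" where
  "triangulation \<Omega> \<longleftrightarrow> finite \<Omega> \<and>
     (\<forall>t\<in>\<Omega>. card t = 3 \<and> \<not> collinear t) \<and>
     (\<forall>t1\<in>\<Omega>. \<forall>t2\<in>\<Omega>. convex hull t1 \<inter> convex hull t2 = convex hull (t1 \<inter> t2))"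

definition longest_edge_choice :: "complex set set \<Rightarrow> (complex set \<Rightarrow> complex set) \<Rightarrow> bool" where
  "longest_edge_choice \<Omega> lg \<longleftrightarrow>
     (\<forall>t\<in>\<Omega>. \<exists>a b. a \<in> t \<and> b \<in> t \<and> a \<noteq> b \<and> lg t = {a, b} \<and>
                   (\<forall>c\<in>t. \<forall>d\<in>t. dist c d \<le> dist a b))"

definition edges_of :: "complex set \<Rightarrow> complex set set" where
  "edges_of t = {e. e \<subseteq> t \<and> card e = 2}"

definition frontier_edge :: "complex set set \<Rightarrow> (complex set \<Rightarrow> complex set) \<Rightarrow> complex set \<Rightarrow> bool" where
  "frontier_edge \<Omega> lg e \<longleftrightarrow>
     card {t\<in>\<Omega>. e \<subseteq> t} \<le> 1 \<or> (\<forall>t\<in>\<Omega>. e \<subseteq> t \<longrightarrow> lg t \<noteq> e)"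

definition lepp_step :: "complex set set \<Rightarrow> (complex set \<Rightarrow> complex set) \<Rightarrow> complex set \<Rightarrow> complex set \<Rightarrow> bool" where
  "lepp_step \<Omega> lg t t' \<longleftrightarrow> t \<in> \<Omega> \<and> t' \<in> \<Omega> \<and> t \<noteq> t' \<and> lg t \<subseteq> t'"

text \<open>Lepp(t) ends at edge e: the Lepp path reaches a triangle t' whose longest edge e is
  either terminal (longest edge of the neighbour too) or a boundary edge (no neighbour).\<close>
definition lepp_ends_at :: "complex set set \<Rightarrow> (complex set \<Rightarrow> complex set) \<Rightarrow> complex set \<Rightarrow> complex set \<Rightarrow> bool" where
  "lepp_ends_at \<Omega> lg t e \<longleftrightarrow>
     (\<exists>t'. (lepp_step \<Omega> lg)\<^sup>*\<^sup>* t t' \<and> t' \<in> \<Omega> \<and> lg t' = e \<and>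
           (\<forall>t''\<in>\<Omega>. t'' \<noteq> t' \<and> e \<subseteq> t'' \<longrightarrow> lg t'' = e))"

definition terminal_edge_region :: "complex set set \<Rightarrow> (complex set \<Rightarrow> complex set) \<Rightarrow> complex set set \<Rightarrow> bool" where
  "terminal_edge_region \<Omega> lg R \<longleftrightarrow>
     (\<exists>e. R = {t\<in>\<Omega>. lepp_ends_at \<Omega> lg t e} \<and> R \<noteq> {})"

definition ccw :: "complex \<Rightarrow> complex \<Rightarrow> complex \<Rightarrow> bool" where
  "ccw a b c \<longleftrightarrow> 0 < Im (cnj (b - a) * (c - a))"

definition next_vertex :: "complex set \<Rightarrow> complex \<Rightarrow> complex" where
  "next_vertex t v = (THE w. w \<in> t \<and> w \<noteq> v \<and> (\<forall>u\<in>t - {v, w}. ccw v w u))"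

definition neighbor_across :: "complex set set \<Rightarrow> complex set \<Rightarrow> complex set \<Rightarrow> complex set" where
  "neighbor_across \<Omega> t e = (THE t'. t' \<in> \<Omega> \<and> t' \<noteq> t \<and> e \<subseteq> t')"

text \<open>State: (current triangle, v_end).
  This reproduces the three cases of the procedure (pivoting around v_end).\<close>
definition poly_step :: "complex set set \<Rightarrow> (complex set \<Rightarrow> complex set) \<Rightarrow>
    complex set \<times> complex \<Rightarrow> complex set \<times> complex" where
  "poly_step \<Omega> lg s = (case s of (t, v) \<Rightarrow>
     (let w = next_vertex t v in
      if frontier_edge \<Omega> lg {v, w} then (t, w) else (neighbor_across \<Omega> t {v, w}, v)))"

definition poly_run :: "complex set set \<Rightarrow> (complex set \<Rightarrow> complex set) \<Rightarrow>
    complex set \<Rightarrow> complex \<Rightarrow> nat \<Rightarrow> complex set \<times> complex" where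
  "poly_run \<Omega> lg t0 ve i = (poly_step \<Omega> lg ^^ i) (t0, ve)"

text \<open>Initialisation at the seed t0: the frontier-edges of t0 form the counter-clockwise chain
  vi -> ... -> ve of k < 3 edges (k = 0: no frontier-edge, vi = ve arbitrary vertex of t0).\<close>
definition seed_init :: "complex set set \<Rightarrow> (complex set \<Rightarrow> complex set) \<Rightarrow>
    complex set \<Rightarrow> complex \<Rightarrow> complex \<Rightarrow> bool" where
  "seed_init \<Omega> lg t0 vi ve \<longleftrightarrow> vi \<in> t0 \<and>
     (\<exists>k<3. ve = (next_vertex t0 ^^ k) vi \<and>
        {e \<in> edges_of t0. frontier_edge \<Omega> lg e} =
        {{(next_vertex t0 ^^ j) vi, (next_vertex t0 ^^ Suc j) vi} | j. j < k})"

definition visits :: "complex set set \<Rightarrow> (complex set \<Rightarrow> complex set) \<Rightarrow>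
    complex set \<Rightarrow> complex \<Rightarrow> nat \<Rightarrow> complex set \<Rightarrow> nat" where
  "visits \<Omega> lg t0 ve n t = card {i. i < n \<and>
      fst (poly_run \<Omega> lg t0 ve i) \<noteq> fst (poly_run \<Omega> lg t0 ve (Suc i)) \<and>
      fst (poly_run \<Omega> lg t0 ve (Suc i)) = t}"

end

theory Submission
  imports Defs
begin

text \<open>The construction is the orbit of the state (t0, ve) under poly_step, which acts on
  the finite set of states (t, v) with v \<in> t. In a conforming triangulation two triangles
  sharing an edge lie on opposite sides of it, hence traverse it in opposite counter-clockwise
  directions; from this, poly_step is injective on states. An injective self-map moves every
  state along a cycle, and (t0, ve) lies on the cycle of (t0, vi), being reached from it along
  the frontier-edges of t0. So no state repeats before the walk is back at (t0, vi). A visit of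
  t ends in one of the three states (t, v), hence t is visited at most three times.\<close>

definition cross :: "complex \<Rightarrow> complex \<Rightarrow> complex \<Rightarrow> real" where
  "cross a b c = (Re b - Re a) * (Im c - Im a) - (Im b - Im a) * (Re c - Re a)"

lemma ccw_iff_cross: "ccw a b c \<longleftrightarrow> 0 < cross a b c"
  by (simp add: ccw_def cross_def algebra_simps)

lemma ccw_rotate: "ccw a b c \<Longrightarrow> ccw b c a"
  unfolding ccw_iff_cross cross_def by (simp add: algebra_simps)

lemma ccw_not_swap: "ccw a b c \<Longrightarrow> \<not> ccw a c b"
  unfolding ccw_iff_cross cross_def by (simp add: algebra_simps)

lemma ccw_distinct: "ccw a b c \<Longrightarrow> a \<noteq> b \<and> a \<noteq> c \<and> b \<noteq> c"
  unfolding ccw_iff_cross cross_def by auto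

lemma collinear_if_cross_eq_0:
  assumes "cross a b c = 0"
  shows "collinear {a, b, c}"
proof (cases "b = a")
  case True
  then show ?thesis by (simp add: collinear_2)
next
  case False
  have "Im ((c - a) / (b - a)) = 0"
    using assms False by (simp add: cross_def Im_divide algebra_simps)
  then have "(c - a) / (b - a) = of_real (Re ((c - a) / (b - a)))"
    by (simp add: complex_eq_iff)
  then have "c - a = Re ((c - a) / (b - a)) *\<^sub>R (b - a)"
    using False by (simp add: scaleR_conv_of_real field_simps)
  then have "collinear {b, a, c}"
    by (auto simp: collinear_3 collinear_lemma)
  then show ?thesis
    by (simp add: insert_commute)
qed

lemma cross_swap: "cross a c b = - cross a b c"
  by (simp add: cross_def algebra_simps)

lemma ccw_or_ccw_swap: "\<not> collinear {a, b, c} \<Longrightarrow> ccw a b c \<or> ccw a c b"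
  using collinear_if_cross_eq_0[of a b c] cross_swap[of a c b]
  unfolding ccw_iff_cross by force

lemma cross_affine_combination:
  assumes "u + v + w = 1"
  shows "cross a b (u *\<^sub>R a + v *\<^sub>R b + w *\<^sub>R c) = w * cross a b c"
proof -
  have u: "u = 1 - v - w"
    using assms by simp
  show ?thesis
    unfolding u by (simp add: cross_def algebra_simps)
qed

lemma cross_eq_0_if_in_segment: "p \<in> convex hull {a, b} \<Longrightarrow> cross a b p = 0"
  unfolding convex_hull_2
  using cross_affine_combination[where w = 0 and c = a] by auto

lemma barycentric_coordinates:
  assumes "cross a b y \<noteq> 0"
  shows "\<exists>\<alpha> \<beta>. \<alpha> + \<beta> + cross a b x / cross a b y = 1 \<and>
           x = \<alpha> *\<^sub>R a + \<beta> *\<^sub>R b + (cross a b x / cross a b y) *\<^sub>R y"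
proof -
  define D where "D = cross a b y"
  have "D *\<^sub>R x = (D - cross a x y - cross a b x) *\<^sub>R a + cross a x y *\<^sub>R b + cross a b x *\<^sub>R y"
    by (simp add: D_def complex_eq_iff cross_def algebra_simps)
  then have "x = ((D - cross a x y - cross a b x) / D) *\<^sub>R a + (cross a x y / D) *\<^sub>R b
                 + (cross a b x / D) *\<^sub>R y"
    using assms by (simp add: D_def complex_eq_iff field_simps)
  moreover have "(D - cross a x y - cross a b x) / D + cross a x y / D + cross a b x / D = 1"
    using assms by (simp add: D_def field_simps)
  ultimately show ?thesis
    unfolding D_def by blast
qed

lemma small_weight_exists:
  fixes \<alpha> \<beta> :: real
  shows "\<exists>s>0. s \<le> 1 \<and> 0 \<le> (1 - s) / 2 + s * \<alpha> \<and> 0 \<le> (1 - s) / 2 + s * \<beta>"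
proof -
  define d where "d = 1 + 2 * \<bar>\<alpha>\<bar> + 2 * \<bar>\<beta>\<bar>"
  have d: "1 \<le> d"
    by (simp add: d_def)
  have "0 \<le> (1 - 1 / d) / 2 + (1 / d) * \<gamma>" if "d \<ge> 1 + 2 * \<bar>\<gamma>\<bar>" for \<gamma> :: real
    using d that by (simp add: field_simps)
  then show ?thesis
    using d by (intro exI[of _ "1 / d"]) (auto simp: d_def)
qed

lemma convex_hull_3_memI:
  "0 \<le> u \<Longrightarrow> 0 \<le> v \<Longrightarrow> 0 \<le> w \<Longrightarrow> u + v + w = 1 \<Longrightarrow>
    u *\<^sub>R a + v *\<^sub>R b + w *\<^sub>R c \<in> convex hull {a, b, c}"
  unfolding convex_hull_3 by blast

text \<open>Points of {a, b, x} close to the midpoint of ab also lie in {a, b, y}; one of them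
  off the line ab contradicts conformity.\<close>

lemma triangulation_no_common_side:
  assumes T: "triangulation \<Omega>" and t: "{a, b, x} \<in> \<Omega>" "{a, b, y} \<in> \<Omega>" and "x \<noteq> y"
    and x: "ccw a b x"
  shows "\<not> ccw a b y"
proof
  assume y: "ccw a b y"
  have "{a, b, x} \<inter> {a, b, y} = {a, b}"
    using ccw_distinct[OF x] ccw_distinct[OF y] \<open>x \<noteq> y\<close> by auto
  then have hulls: "convex hull {a, b, x} \<inter> convex hull {a, b, y} = convex hull {a, b}"
    using T t unfolding triangulation_def by metis
  define \<gamma> where "\<gamma> = cross a b x / cross a b y"
  have \<gamma>: "0 < \<gamma>"
    using x y by (simp add: \<gamma>_def ccw_iff_cross)
  obtain \<alpha> \<beta> where \<alpha>\<beta>: "\<alpha> + \<beta> + \<gamma> = 1" "x = \<alpha> *\<^sub>R a + \<beta> *\<^sub>R b + \<gamma> *\<^sub>R y"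
    using barycentric_coordinates[of a b y x] y unfolding \<gamma>_def ccw_iff_cross by auto
  obtain s :: real where s: "0 < s" "s \<le> 1" "0 \<le> (1 - s) / 2 + s * \<alpha>" "0 \<le> (1 - s) / 2 + s * \<beta>"
    using small_weight_exists by blast
  define P where "P = ((1 - s) / 2) *\<^sub>R a + ((1 - s) / 2) *\<^sub>R b + s *\<^sub>R x"
  have "P \<in> convex hull {a, b, x}"
    unfolding P_def using s by (intro convex_hull_3_memI) auto
  moreover have "P \<in> convex hull {a, b, y}"
  proof -
    have P: "P = ((1 - s) / 2 + s * \<alpha>) *\<^sub>R a + ((1 - s) / 2 + s * \<beta>) *\<^sub>R b + (s * \<gamma>) *\<^sub>R y"
      unfolding P_def \<alpha>\<beta>(2) by (simp add: algebra_simps)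
    have "s * \<alpha> + s * \<beta> + s * \<gamma> = s"
      using \<alpha>\<beta>(1) by (metis distrib_left mult.right_neutral)
    then show ?thesis
      unfolding P by (intro convex_hull_3_memI) (use s \<gamma> in auto)
  qed
  ultimately have "cross a b P = 0"
    using hulls cross_eq_0_if_in_segment by blast
  moreover have "cross a b P = s * cross a b x"
    unfolding P_def by (rule cross_affine_combination) simp
  ultimately show False
    using s x by (simp add: ccw_iff_cross)
qed

lemma next_vertex_eqI:
  assumes "t = {a, b, c}" "ccw a b c"
  shows "next_vertex t a = b"
  unfolding next_vertex_def
proof (rule the_equality)
  show "b \<in> t \<and> b \<noteq> a \<and> (\<forall>u\<in>t - {a, b}. ccw a b u)"
    using assms ccw_distinct[OF assms(2)] by auto
next
  fix w
  assume w: "w \<in> t \<and> w \<noteq> a \<and> (\<forall>u\<in>t - {a, w}. ccw a w u)"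
  show "w = b"
  proof (rule ccontr)
    assume "w \<noteq> b"
    then have "w = c" "ccw a c b"
      using w assms ccw_distinct[OF assms(2)] by auto
    then show False
      using ccw_not_swap assms(2) by blast
  qed
qed

lemma next_vertex_cycle:
  assumes "t = {a, b, c}" "ccw a b c"
  shows "next_vertex t a = b" "next_vertex t b = c" "next_vertex t c = a"
proof -
  have "t = {b, c, a}" "t = {c, a, b}"
    using assms(1) by auto
  then show "next_vertex t a = b" "next_vertex t b = c" "next_vertex t c = a"
    using next_vertex_eqI assms ccw_rotate by metis+
qed

lemma triangle_ccw_from_vertex:
  assumes T: "triangulation \<Omega>" and t: "t \<in> \<Omega>" and v: "v \<in> t"
  obtains w x where "t = {v, w, x}" "ccw v w x"
proof -
  obtain p q where pq: "t = {v, p, q}"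
    using v card_3_iff[of t] T t unfolding triangulation_def by (auto simp: insert_commute)
  then have "ccw v p q \<or> ccw v q p"
    using ccw_or_ccw_swap T t unfolding triangulation_def by blast
  then show thesis
    using that pq by (metis insert_commute)
qed

lemma next_vertex_in_triangle:
  assumes "triangulation \<Omega>" "t \<in> \<Omega>" "v \<in> t"
  shows "next_vertex t v \<in> t" "next_vertex t v \<noteq> v"
proof -
  obtain w x where t: "t = {v, w, x}" and ccw: "ccw v w x"
    using triangle_ccw_from_vertex assms by blast
  then show "next_vertex t v \<in> t" "next_vertex t v \<noteq> v"
    using next_vertex_cycle(1)[OF t ccw] ccw_distinct[OF ccw] by auto
qed

lemma next_vertex_inj_on:
  assumes "triangulation \<Omega>" "t \<in> \<Omega>"
  shows "inj_on (next_vertex t) t"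
proof
  fix v v'
  assume "v \<in> t" "v' \<in> t" and eq: "next_vertex t v = next_vertex t v'"
  then obtain w x where t: "t = {v, w, x}" and ccw: "ccw v w x"
    using triangle_ccw_from_vertex assms by blast
  then show "v = v'"
    using \<open>v' \<in> t\<close> eq next_vertex_cycle[OF t ccw] ccw_distinct[OF ccw] by auto
qed

lemma next_vertex_twice_neq:
  assumes "triangulation \<Omega>" "t \<in> \<Omega>" "v \<in> t"
  shows "next_vertex t (next_vertex t v) \<noteq> v"
proof -
  obtain w x where "t = {v, w, x}" "ccw v w x"
    using triangle_ccw_from_vertex assms by blast
  then show ?thesis
    using next_vertex_cycle ccw_distinct by metis
qed

lemma next_vertex_direction:
  assumes "triangulation \<Omega>" "t \<in> \<Omega>" "v \<in> t" "w \<in> t" "v \<noteq> w"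
  shows "next_vertex t v = w \<or> next_vertex t w = v"
proof -
  obtain p q where "t = {v, p, q}" "ccw v p q"
    using triangle_ccw_from_vertex assms by blast
  then show ?thesis
    using assms(4,5) next_vertex_cycle by auto
qed

lemma next_vertex_across_shared_edge:
  assumes T: "triangulation \<Omega>" and t: "t \<in> \<Omega>" "v \<in> t" "next_vertex t v = w"
    and t': "t' \<in> \<Omega>" "v \<in> t'" "w \<in> t'" "t' \<noteq> t"
  shows "next_vertex t' w = v"
proof -
  obtain x where tx: "t = {v, w, x}" "ccw v w x"
    using triangle_ccw_from_vertex[OF T t(1,2)] next_vertex_cycle(1) t(3) by metis
  obtain y z where t'yz: "t' = {w, y, z}" "ccw w y z"
    using triangle_ccw_from_vertex[OF T t'(1,3)] by blast
  show ?thesis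
  proof (cases "y = v")
    case True
    then show ?thesis
      using t'yz next_vertex_cycle(1) by blast
  next
    case False
    then have "t' = {v, w, y}" "ccw v w y"
      using t'yz t'(2) ccw_distinct[OF tx(2)] ccw_rotate by auto
    moreover have "x \<noteq> y"
      using tx t'(4) calculation(1) by auto
    ultimately show ?thesis
      using triangulation_no_common_side[OF T] tx t(1) t'(1) by metis
  qed
qed

lemma edge_in_at_most_two_triangles:
  assumes T: "triangulation \<Omega>" and t: "t1 \<in> \<Omega>" "t2 \<in> \<Omega>" "t3 \<in> \<Omega>"
    and distinct: "t1 \<noteq> t2" "t1 \<noteq> t3" "t2 \<noteq> t3"
    and edge: "{v, w} \<subseteq> t1" "{v, w} \<subseteq> t2" "{v, w} \<subseteq> t3" "v \<noteq> w"
  shows False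
proof -
  have False if "next_vertex t1 a = b" "{a, b} = {v, w}" for a b
  proof -
    have ab: "a \<in> t1" "a \<in> t2" "b \<in> t2" "a \<in> t3" "b \<in> t3"
      using edge that(2) by auto
    have "next_vertex t2 b = a" "next_vertex t3 b = a"
      using next_vertex_across_shared_edge[OF T t(1) ab(1) that(1)] t ab distinct by auto
    moreover have "next_vertex t3 a = b"
      using next_vertex_across_shared_edge[OF T t(2) ab(3) \<open>next_vertex t2 b = a\<close> t(3)]
        ab distinct by auto
    ultimately show False
      using next_vertex_twice_neq[OF T t(3) ab(4)] by simp
  qed
  then show False
    using next_vertex_direction[OF T t(1), of v w] edge by auto
qed

lemma poly_step_frontier:
  "frontier_edge \<Omega> lg {v, next_vertex t v} \<Longrightarrow> poly_step \<Omega> lg (t, v) = (t, next_vertex t v)"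
  by (simp add: poly_step_def Let_def)

lemma poly_step_interior:
  assumes T: "triangulation \<Omega>" and t: "t \<in> \<Omega>" "v \<in> t"
    and interior: "\<not> frontier_edge \<Omega> lg {v, next_vertex t v}"
  obtains t' where "t' \<in> \<Omega>" "t' \<noteq> t" "v \<in> t'" "next_vertex t v \<in> t'"
    "poly_step \<Omega> lg (t, v) = (t', v)"
proof -
  let ?w = "next_vertex t v"
  let ?E = "{t' \<in> \<Omega>. {v, ?w} \<subseteq> t'}"
  have "finite ?E"
    using T unfolding triangulation_def by simp
  moreover have "2 \<le> card ?E"
    using interior unfolding frontier_edge_def by simp
  ultimately have "\<not> ?E \<subseteq> {t}"
    using card_mono[of "{t}" ?E] by auto
  then obtain t' where t': "t' \<in> \<Omega>" "v \<in> t'" "?w \<in> t'" "t' \<noteq> t"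
    by auto
  have "neighbor_across \<Omega> t {v, ?w} = t'"
    unfolding neighbor_across_def
  proof (rule the_equality)
    fix t''
    assume "t'' \<in> \<Omega> \<and> t'' \<noteq> t \<and> {v, ?w} \<subseteq> t''"
    then show "t'' = t'"
      using edge_in_at_most_two_triangles[OF T t(1) t'(1), of t'' v ?w] t t'
        next_vertex_in_triangle[OF T t] by auto
  qed (use t' in auto)
  then show thesis
    using that t' interior by (simp add: poly_step_def Let_def)
qed

definition poly_states :: "complex set set \<Rightarrow> (complex set \<times> complex) set" where
  "poly_states \<Omega> = (SIGMA t:\<Omega>. t)"

lemma poly_step_in_states:
  assumes T: "triangulation \<Omega>"
  shows "poly_step \<Omega> lg ` poly_states \<Omega> \<subseteq> poly_states \<Omega>"
proof -
  have step_in: "poly_step \<Omega> lg (t, v) \<in> poly_states \<Omega>" if t: "t \<in> \<Omega>" "v \<in> t" for t v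
  proof (cases "frontier_edge \<Omega> lg {v, next_vertex t v}")
    case True
    then show ?thesis
      using t next_vertex_in_triangle[OF T t] by (simp add: poly_step_frontier poly_states_def)
  next
    case False
    then show ?thesis
      using poly_step_interior[OF T t] by (metis SigmaI poly_states_def)
  qed
  then show ?thesis
    unfolding poly_states_def by (metis SigmaE image_subsetI)
qed

lemma poly_step_frontier_neq_interior:
  assumes T: "triangulation \<Omega>" and t1: "t1 \<in> \<Omega>" "v1 \<in> t1" and t2: "t2 \<in> \<Omega>" "v2 \<in> t2"
    and frontier: "frontier_edge \<Omega> lg {v1, next_vertex t1 v1}"
    and interior: "\<not> frontier_edge \<Omega> lg {v2, next_vertex t2 v2}"
  shows "poly_step \<Omega> lg (t1, v1) \<noteq> poly_step \<Omega> lg (t2, v2)"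
proof
  let ?w2 = "next_vertex t2 v2"
  assume "poly_step \<Omega> lg (t1, v1) = poly_step \<Omega> lg (t2, v2)"
  moreover obtain t' where t': "t' \<in> \<Omega>" "t' \<noteq> t2" "v2 \<in> t'" "?w2 \<in> t'"
    and step2: "poly_step \<Omega> lg (t2, v2) = (t', v2)"
    using poly_step_interior[OF T t2 interior] by blast
  ultimately have "(t1, next_vertex t1 v1) = (t', v2)"
    using poly_step_frontier[OF frontier] by metis
  then have t'_eq: "t' = t1" and v2_eq: "next_vertex t1 v1 = v2"
    by auto
  have "next_vertex t1 ?w2 = v2"
    using next_vertex_across_shared_edge[OF T t2 refl t'(1,3,4,2)] t'_eq by simp
  then have "?w2 = v1"
    using inj_onD[OF next_vertex_inj_on[OF T t1(1)]] v2_eq t'(4) t1(2) t'_eq by metis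
  then have "{v2, ?w2} = {v1, next_vertex t1 v1}"
    using v2_eq by auto
  then show False
    using frontier interior by simp
qed

lemma poly_step_eq_imp_eq:
  assumes T: "triangulation \<Omega>" and t1: "t1 \<in> \<Omega>" "v1 \<in> t1" and t2: "t2 \<in> \<Omega>" "v2 \<in> t2"
    and eq: "poly_step \<Omega> lg (t1, v1) = poly_step \<Omega> lg (t2, v2)"
  shows "t1 = t2 \<and> v1 = v2"
proof (cases "frontier_edge \<Omega> lg {v1, next_vertex t1 v1}";
       cases "frontier_edge \<Omega> lg {v2, next_vertex t2 v2}")
  assume "frontier_edge \<Omega> lg {v1, next_vertex t1 v1}" "frontier_edge \<Omega> lg {v2, next_vertex t2 v2}"
  then have "(t1, next_vertex t1 v1) = (t2, next_vertex t2 v2)"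
    using eq poly_step_frontier by metis
  then have "t1 = t2" "next_vertex t2 v1 = next_vertex t2 v2"
    by auto
  then show ?thesis
    using inj_onD[OF next_vertex_inj_on[OF T t2(1)]] t1 t2 by metis
next
  assume "frontier_edge \<Omega> lg {v1, next_vertex t1 v1}" "\<not> frontier_edge \<Omega> lg {v2, next_vertex t2 v2}"
  then show ?thesis
    using poly_step_frontier_neq_interior[OF T t1 t2] eq by blast
next
  assume "\<not> frontier_edge \<Omega> lg {v1, next_vertex t1 v1}" "frontier_edge \<Omega> lg {v2, next_vertex t2 v2}"
  then show ?thesis
    using poly_step_frontier_neq_interior[OF T t2 t1] eq by metis
next
  let ?w1 = "next_vertex t1 v1" and ?w2 = "next_vertex t2 v2"
  assume interior: "\<not> frontier_edge \<Omega> lg {v1, ?w1}" "\<not> frontier_edge \<Omega> lg {v2, ?w2}"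
  obtain t' where t': "t' \<in> \<Omega>" "t' \<noteq> t1" "v1 \<in> t'" "?w1 \<in> t'"
    and step1: "poly_step \<Omega> lg (t1, v1) = (t', v1)"
    using poly_step_interior[OF T t1 interior(1)] by blast
  obtain t'' where t'': "t'' \<in> \<Omega>" "t'' \<noteq> t2" "v2 \<in> t''" "?w2 \<in> t''"
    and step2: "poly_step \<Omega> lg (t2, v2) = (t'', v2)"
    using poly_step_interior[OF T t2 interior(2)] by blast
  have same: "t'' = t'" "v2 = v1"
    using eq step1 step2 by simp_all
  have "next_vertex t' ?w1 = v1" "next_vertex t' ?w2 = v1"
    using next_vertex_across_shared_edge[OF T t1 refl t'(1,3,4,2)]
      next_vertex_across_shared_edge[OF T t2 refl t''(1,3,4,2)] same by simp_all
  then have "?w1 = ?w2"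
    using inj_onD[OF next_vertex_inj_on[OF T t'(1)]] t'(4) t''(4) same by metis
  then have edge: "{v1, ?w1} \<subseteq> t1" "{v1, ?w1} \<subseteq> t2" "{v1, ?w1} \<subseteq> t'" "v1 \<noteq> ?w1"
    using t1 t2 t' same next_vertex_in_triangle[OF T t1] next_vertex_in_triangle[OF T t2] by auto
  have "t1 = t2"
    using edge_in_at_most_two_triangles[OF T t1(1) t2(1) t'(1) _ _ _ edge] t'(2) t''(2) same by blast
  then show ?thesis
    using same by simp
qed

lemma inj_on_poly_step:
  assumes "triangulation \<Omega>"
  shows "inj_on (poly_step \<Omega> lg) (poly_states \<Omega>)"
proof (rule inj_onI)
  fix s1 s2
  assume "s1 \<in> poly_states \<Omega>" "s2 \<in> poly_states \<Omega>" "poly_step \<Omega> lg s1 = poly_step \<Omega> lg s2"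
  then show "s1 = s2"
    using poly_step_eq_imp_eq[OF assms] unfolding poly_states_def by (metis SigmaE)
qed

lemma funpow_in_invariant_set: "f ` S \<subseteq> S \<Longrightarrow> x \<in> S \<Longrightarrow> (f ^^ i) x \<in> S"
  by (induction i) auto

lemma funpow_inj_on_cancel:
  assumes "f ` S \<subseteq> S" "inj_on f S" "x \<in> S" "y \<in> S" "(f ^^ i) x = (f ^^ i) y"
  shows "x = y"
  using assms(3-5)
proof (induction i arbitrary: x y)
  case (Suc i)
  have "(f ^^ i) (f x) = (f ^^ i) (f y)"
    using Suc.prems(3) by (simp add: funpow_swap1)
  then have "f x = f y"
    using Suc.IH assms(1) Suc.prems(1,2) by blast
  then show ?case
    using assms(2) Suc.prems(1,2) by (meson inj_onD)
qed simp

lemma funpow_periodic: "(f ^^ p) y = y \<Longrightarrow> (f ^^ (m * p)) y = y"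
  by (induction m) (simp_all add: funpow_add)

lemma inj_on_orbit_before_return:
  assumes S: "f ` S \<subseteq> S" "inj_on f S" "y \<in> S" and x: "(f ^^ k) y = x"
    and no_return: "\<forall>j. 1 \<le> j \<and> j < n \<longrightarrow> (f ^^ j) x \<noteq> y"
  shows "inj_on (\<lambda>i. (f ^^ i) x) {1..n}"
proof -
  have "(f ^^ a) x \<noteq> (f ^^ b) x" if ab: "1 \<le> a" "a < b" "b \<le> n" for a b
  proof
    assume eq: "(f ^^ a) x = (f ^^ b) x"
    define p where "p = b - a"
    have "a + k + p = b + k"
      using ab by (simp add: p_def)
    then have "(f ^^ (a + k)) ((f ^^ p) y) = (f ^^ (b + k)) y"
      by (metis funpow_add o_apply)
    then have "(f ^^ (a + k)) y = (f ^^ (a + k)) ((f ^^ p) y)"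
      using eq by (simp add: funpow_add x)
    then have period: "(f ^^ p) y = y"
      using funpow_inj_on_cancel[OF S(1,2) S(3) funpow_in_invariant_set[OF S(1,3)]] by metis
    define q where "q = p - k mod p"
    have "0 < p" "p < n"
      using ab by (auto simp: p_def)
    moreover have "k mod p < p" "k div p * p + k mod p = k"
      using \<open>0 < p\<close> div_mult_mod_eq[of k p] by simp_all
    ultimately have q: "1 \<le> q" "q < n" "q + k = (k div p + 1) * p"
      unfolding q_def distrib_right mult_1 by linarith+
    have "(f ^^ q) x = (f ^^ (q + k)) y"
      by (simp add: x[symmetric] funpow_add)
    also have "\<dots> = y"
      unfolding q(3) by (rule funpow_periodic[OF period])
    finally show False
      using no_return q(1,2) by blast
  qed
  then show ?thesis
    by (intro inj_onI) (metis atLeastAtMost_iff linorder_neqE_nat)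
qed

lemma seed_init_reaches_start:
  assumes "seed_init \<Omega> lg t0 vi ve"
  shows "\<exists>k. (poly_step \<Omega> lg ^^ k) (t0, vi) = (t0, ve)"
proof -
  obtain k where k: "ve = (next_vertex t0 ^^ k) vi"
    and frontier: "{e \<in> edges_of t0. frontier_edge \<Omega> lg e} =
        {{(next_vertex t0 ^^ j) vi, (next_vertex t0 ^^ Suc j) vi} | j. j < k}"
    using assms unfolding seed_init_def by blast
  have "(poly_step \<Omega> lg ^^ j) (t0, vi) = (t0, (next_vertex t0 ^^ j) vi)" if "j \<le> k" for j
    using that
  proof (induction j)
    case (Suc j)
    then have "{(next_vertex t0 ^^ j) vi, (next_vertex t0 ^^ Suc j) vi} \<in>
        {{(next_vertex t0 ^^ j) vi, (next_vertex t0 ^^ Suc j) vi} | j. j < k}"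
      by auto
    then have "frontier_edge \<Omega> lg {(next_vertex t0 ^^ j) vi, next_vertex t0 ((next_vertex t0 ^^ j) vi)}"
      using frontier by auto
    then show ?case
      using Suc by (simp add: poly_step_frontier)
  qed simp
  then show ?thesis
    using k by blast
qed

lemma visits_le_card:
  assumes T: "triangulation \<Omega>" and t0: "t0 \<in> \<Omega>" and seed: "seed_init \<Omega> lg t0 vi ve"
    and no_return: "\<forall>j. 1 \<le> j \<and> j < n \<longrightarrow> poly_run \<Omega> lg t0 ve j \<noteq> (t0, vi)"
    and t: "t \<in> \<Omega>"
  shows "visits \<Omega> lg t0 ve n t \<le> card t"
proof -
  let ?f = "poly_step \<Omega> lg"
  let ?run = "poly_run \<Omega> lg t0 ve"
  note step_in = poly_step_in_states[OF T, of lg]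
  obtain k where k: "(?f ^^ k) (t0, vi) = (t0, ve)"
    using seed_init_reaches_start[OF seed] by blast
  moreover have start: "(t0, vi) \<in> poly_states \<Omega>"
    using t0 seed by (simp add: poly_states_def seed_init_def)
  ultimately have inj: "inj_on ?run {1..n}"
    using inj_on_orbit_before_return[OF step_in inj_on_poly_step[OF T] start k] no_return
    unfolding poly_run_def by blast
  have run_in: "?run i \<in> poly_states \<Omega>" for i
    using funpow_in_invariant_set[OF step_in] funpow_in_invariant_set[OF step_in start, of k] k
    unfolding poly_run_def by metis
  define V where "V = {i. i < n \<and> fst (?run i) \<noteq> fst (?run (Suc i)) \<and> fst (?run (Suc i)) = t}"
  have "inj_on (\<lambda>i. ?run (Suc i)) V"
  proof (rule inj_onI)
    fix i j
    assume "i \<in> V" "j \<in> V" "?run (Suc i) = ?run (Suc j)"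
    moreover have "Suc i \<in> {1..n}" "Suc j \<in> {1..n}"
      using \<open>i \<in> V\<close> \<open>j \<in> V\<close> by (auto simp: V_def)
    ultimately show "i = j"
      using inj_onD[OF inj] by blast
  qed
  moreover have "(\<lambda>i. ?run (Suc i)) ` V \<subseteq> {t} \<times> t"
  proof (rule image_subsetI)
    fix i
    assume "i \<in> V"
    then have "fst (?run (Suc i)) = t"
      by (simp add: V_def)
    then show "?run (Suc i) \<in> {t} \<times> t"
      using run_in[of "Suc i"] unfolding poly_states_def by (cases "?run (Suc i)") simp
  qed
  moreover have "finite t"
    using T t unfolding triangulation_def by (intro card_ge_0_finite) simp
  ultimately have "card V \<le> card ({t} \<times> t)"
    by (intro card_inj_on_le) auto
  then show ?thesis
    unfolding visits_def V_def by (simp add: card_cartesian_product_singleton)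
qed

theorem lemma1:
  fixes \<Omega> R :: "complex set set" and lg :: "complex set \<Rightarrow> complex set"
    and t0 t :: "complex set" and vi ve :: complex and n :: nat
  assumes "triangulation \<Omega>"
    and "longest_edge_choice \<Omega> lg"
    and "terminal_edge_region \<Omega> lg R"
    and "t0 \<in> R"
    and "seed_init \<Omega> lg t0 vi ve"
    and "\<forall>j. 1 \<le> j \<and> j < n \<longrightarrow> poly_run \<Omega> lg t0 ve j \<noteq> (t0, vi)"
    and "t \<in> R"
  shows "visits \<Omega> lg t0 ve n t \<le> 3"
proof -
  have "R \<subseteq> \<Omega>"
    using assms(3) unfolding terminal_edge_region_def by auto
  then have "t0 \<in> \<Omega>" "t \<in> \<Omega>"
    using assms(4,7) by auto
  then have "visits \<Omega> lg t0 ve n t \<le> card t"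
    using visits_le_card[OF assms(1) _ assms(5,6)] by blast
  also have "card t = 3"
    using assms(1) \<open>t \<in> \<Omega>\<close> by (simp add: triangulation_def)
  finally show ?thesis .
qed

end
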